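(* Let $(S_t)_{t\in\mathbb{Z}}$ be a stationary process over a finite alphabet $\mathcal{A}$ that is order-$R$ Markovian for some integer $R\ge 1$, i.e. $\Pr(S_i\mid \ldots,S_{i-2},S_{i-1})=\Pr(S_i\mid S_{i-R},\ldots,S_{i-1})$. Then its synchronization information $\mathbf{S}$ and transient information $\mathbf{T}$ (defined below) satisfy $$\mathbf{S}=\mathbf{T}+\tfrac12 R(R+1)\,h_\mu .$$
   Context: For $L\ge1$ let $H(L)=-\sum_{s^L\in\mathcal{A}^L}\Pr(s^L)\log_2\Pr(s^L)$ be the Shannon entropy of the block $S_1\cdots S_L$, and set $H(0)=0$. Let $h_\mu(L)=H(L)-H(L-1)$ for $L\ge1$, let $h_\mu=\lim_{L\to\infty}H(L)/L$ (the entropy rate), and let $\mathbf{E}=\sum_{L=1}^\infty[h_\mu(L)-h_\mu]$ (the excess entropy). For an order-$R$ Markov process $\mathbf{E}$ is finite. The transient information is $\mathbf{T}=\sum_{L=0}^\infty[\mathbf{E}+h_\mu L-H(L)]$. Synchronization: the process is modeled as a Markov chain whose states are the $R$-blocks (states are in one-to-one correspondence with the words of length $R$; transitions slide the block by one symbol), with stationary distribution $\pi(s^R)=\Pr(s^R)$. An observer who knows this model but not the current state starts with distribution $\pi$ over the state $(S_1,\ldots,S_R)$, and after observing $s_1\cdots s_L$ holds the conditional distribution $\Pr(v\mid s^L)$ over states $v$ consistent with the observations: for $L\le R$ this is the conditional distribution of the $R$-block $(S_1,\ldots,S_R)$ given $S_1\cdots S_L=s^L$, and for $L\ge R$ the current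 state (the last $R$ observed symbols) is determined. The average state-uncertainty is $\mathcal{H}(L)=-\sum_{s^L}\Pr(s^L)\sum_v\Pr(v\mid s^L)\log_2\Pr(v\mid s^L)$, and the synchronization information is $\mathbf{S}=\sum_{L=0}^\infty\mathcal{H}(L)$. *)

theory Defs
  imports Complex_Main
begin

text \<open>A stationary process over the finite alphabet 'a is represented by its
  block (word) probabilities: p w = Pr(S_1 ... S_n = w) for a word w of length n.\<close>

definition words :: "nat \<Rightarrow> 'a list set" where
  "words L = {w. length w = L}"

definition stationary_process :: "('a::finite list \<Rightarrow> real) \<Rightarrow> bool" where
  "stationary_process p \<longleftrightarrow>
     p [] = 1 \<and> (\<forall>w. 0 \<le> p w) \<and>
     (\<forall>w. (\<Sum>a\<in>UNIV. p (w @ [a])) = p w) \<and>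
     (\<forall>w. (\<Sum>a\<in>UNIV. p (a # w)) = p w)"

text \<open>Order-R Markov: Pr(a | w) = Pr(a | last R symbols of w) whenever length w \<ge> R
  (written cross-multiplied to avoid division by zero).\<close>
definition markov_order :: "nat \<Rightarrow> ('a::finite list \<Rightarrow> real) \<Rightarrow> bool" where
  "markov_order R p \<longleftrightarrow>
     (\<forall>w a. R \<le> length w \<longrightarrow>
        p (w @ [a]) * p (drop (length w - R) w) = p w * p (drop (length w - R) w @ [a]))"

definition block_entropy :: "('a::finite list \<Rightarrow> real) \<Rightarrow> nat \<Rightarrow> real" where
  "block_entropy p L = - (\<Sum>w\<in>words L. p w * log 2 (p w))"

definition entropy_rate :: "('a::finite list \<Rightarrow> real) \<Rightarrow> real" where
  "entropy_rate p = lim (\<lambda>L. block_entropy p L / real L)"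

definition entropy_gain :: "('a::finite list \<Rightarrow> real) \<Rightarrow> nat \<Rightarrow> real" where
  "entropy_gain p L = block_entropy p L - block_entropy p (L - 1)"

definition excess_entropy :: "('a::finite list \<Rightarrow> real) \<Rightarrow> real" where
  "excess_entropy p = (\<Sum>L. entropy_gain p (Suc L) - entropy_rate p)"

definition transient_info :: "('a::finite list \<Rightarrow> real) \<Rightarrow> real" where
  "transient_info p =
     (\<Sum>L. excess_entropy p + entropy_rate p * real L - block_entropy p L)"

text \<open>Observer's conditional distribution over the R-block states v after observing s:
  for length s \<le> R it is Pr((S_1..S_R) = v | S_1..S_L = s); for length s \<ge> R
  the state is the last R observed symbols.\<close>
definition state_post :: "nat \<Rightarrow> ('a::finite list \<Rightarrow> real) \<Rightarrow> 'a list \<Rightarrow> 'a list \<Rightarrow> real" where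
  "state_post R p s v =
     (if length s \<le> R then (if take (length s) v = s then p v / p s else 0)
      else (if v = drop (length s - R) s then 1 else 0))"

definition state_uncertainty :: "nat \<Rightarrow> ('a::finite list \<Rightarrow> real) \<Rightarrow> nat \<Rightarrow> real" where
  "state_uncertainty R p L =
     - (\<Sum>s\<in>words L. p s * (\<Sum>v\<in>words R. state_post R p s v * log 2 (state_post R p s v)))"

definition sync_info :: "nat \<Rightarrow> ('a::finite list \<Rightarrow> real) \<Rightarrow> real" where
  "sync_info R p = (\<Sum>L. state_uncertainty R p L)"

end

theory Submission
  imports Defs
begin

text \<open>For an order-\<open>R\<close> Markov process every block of length \<open>L \<ge> R\<close> is extended by
  a symbol whose conditional entropy given the last \<open>R\<close> symbols is always the same
  number \<open>h\<close>, so \<open>H(L) = H(R) + (L - R) h\<close> beyond \<open>R\<close>; hence \<open>h\<^sub>\<mu> = h\<close>,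
  \<open>\<E> = H(R) - R h\<close>, and the transient information is a finite sum over \<open>L < R\<close>.
  On the other side, observing a prefix of length \<open>L \<le> R\<close> of the \<open>R\<close>-block leaves
  exactly \<open>H(R) - H(L)\<close> bits of state uncertainty, and none is left after \<open>R\<close> symbols.
  Comparing the two finite sums term by term leaves \<open>\<Sum>L<R. (R - L) h = R(R+1)/2 \<cdot> h\<close>.\<close>

lemma finite_words [simp]: "finite (words L :: 'a::finite list set)"
  unfolding words_def using finite_lists_length_eq[of "UNIV :: 'a set" L] by simp

lemma words_0: "words 0 = {[]}"
  by (auto simp: words_def)

lemma sum_words_add:
  fixes f :: "'a::finite list \<Rightarrow> 'b::comm_monoid_add"
  shows "(\<Sum>w\<in>words (m + n). f w) = (\<Sum>x\<in>words m. \<Sum>u\<in>words n. f (x @ u))"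
proof -
  have words_eq: "words (m + n) = (\<lambda>(x, u). x @ u) ` (words m \<times> (words n :: 'a list set))"
  proof (rule equalityI)
    show "words (m + n) \<subseteq> (\<lambda>(x, u). x @ u) ` (words m \<times> words n)"
      by (auto simp: words_def intro!: image_eqI[where x = "(take m w, drop m w)" for w])
  qed (auto simp: words_def)
  have "inj_on (\<lambda>(x, u). x @ u) (words m \<times> (words n :: 'a list set))"
    by (auto simp: inj_on_def words_def)
  then have "(\<Sum>w\<in>words (m + n). f w) = (\<Sum>(x, u)\<in>words m \<times> words n. f (x @ u))"
    unfolding words_eq by (simp add: sum.reindex case_prod_unfold)
  then show ?thesis
    by (simp add: sum.cartesian_product)
qed

lemma sum_words_Suc_0:
  fixes g :: "'a::finite list \<Rightarrow> 'b::comm_monoid_add"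
  shows "(\<Sum>x\<in>words (Suc 0). g x) = (\<Sum>a\<in>UNIV. g [a])"
proof -
  have "words (Suc 0) = (\<lambda>a. [a]) ` (UNIV :: 'a set)"
    by (auto simp: words_def length_Suc_conv)
  then show ?thesis
    by (simp add: sum.reindex inj_on_def)
qed

lemma sum_words_Suc_snoc:
  fixes f :: "'a::finite list \<Rightarrow> 'b::comm_monoid_add"
  shows "(\<Sum>w\<in>words (Suc n). f w) = (\<Sum>x\<in>words n. \<Sum>a\<in>UNIV. f (x @ [a]))"
  using sum_words_add[of f n "Suc 0"] by (simp add: sum_words_Suc_0)

lemma sum_words_Suc_Cons:
  fixes f :: "'a::finite list \<Rightarrow> 'b::comm_monoid_add"
  shows "(\<Sum>w\<in>words (Suc n). f w) = (\<Sum>a\<in>UNIV. \<Sum>x\<in>words n. f (a # x))"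
  using sum_words_add[of f "Suc 0" n] sum_words_Suc_0[of "\<lambda>y. \<Sum>u\<in>words n. f (y @ u)"]
  by simp

definition xlog :: "real \<Rightarrow> real" where
  "xlog t = t * log 2 t"

lemma xlog_0 [simp]: "xlog 0 = 0" and xlog_1 [simp]: "xlog 1 = 0"
  by (simp_all add: xlog_def)

lemma xlog_mult: "0 \<le> x \<Longrightarrow> 0 \<le> c \<Longrightarrow> xlog (x * c) = c * xlog x + x * xlog c"
  by (cases "x = 0 \<or> c = 0") (auto simp: xlog_def log_mult algebra_simps)

lemma mult_xlog_divide:
  assumes "0 \<le> y" "y \<le> x"
  shows "x * xlog (y / x) = xlog y - y * log 2 x"
  using assms by (cases "y = 0") (auto simp: xlog_def log_divide algebra_simps)

lemma block_entropy_xlog: "block_entropy p L = - (\<Sum>w\<in>words L. xlog (p w))"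
  by (simp add: block_entropy_def xlog_def)

lemma state_uncertainty_beyond:
  assumes "R < L"
  shows "state_uncertainty R p L = 0"
proof -
  have certain: "state_post R p s v * log 2 (state_post R p s v) = 0" if "length s = L" for s v
    using assms that by (simp add: state_post_def)
  show ?thesis
    by (simp add: state_uncertainty_def words_def certain)
qed

locale stationary =
  fixes p :: "'a::finite list \<Rightarrow> real"
  assumes stationary: "stationary_process p"
begin

lemma nonneg: "0 \<le> p w"
  using stationary by (simp add: stationary_process_def)

lemma block_entropy_0: "block_entropy p 0 = 0"
  using stationary by (simp add: block_entropy_xlog words_0 stationary_process_def)

lemma sum_prefixes: "(\<Sum>x\<in>words m. p (x @ u)) = p u"
proof (induction m)
  case (Suc m)
  have "(\<Sum>x\<in>words (Suc m). p (x @ u)) = (\<Sum>x\<in>words m. \<Sum>a\<in>UNIV. p (a # x @ u))"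
    by (simp add: sum_words_Suc_Cons sum.swap[of _ UNIV])
  also have "\<dots> = (\<Sum>x\<in>words m. p (x @ u))"
    using stationary by (simp add: stationary_process_def)
  finally show ?case
    using Suc by simp
qed (simp add: words_0)

lemma sum_suffixes: "(\<Sum>u\<in>words n. p (x @ u)) = p x"
proof (induction n)
  case (Suc n)
  have "(\<Sum>u\<in>words (Suc n). p (x @ u)) = (\<Sum>u\<in>words n. \<Sum>a\<in>UNIV. p ((x @ u) @ [a]))"
    by (simp add: sum_words_Suc_snoc)
  also have "\<dots> = (\<Sum>u\<in>words n. p (x @ u))"
    using stationary by (simp only: stationary_process_def)
  finally show ?case
    using Suc by simp
qed (simp add: words_0)

lemma append_le_right: "p (x @ u) \<le> p u"
proof -
  have "p (x @ u) \<le> (\<Sum>y\<in>words (length x). p (y @ u))"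
    using finite_words by (intro member_le_sum) (auto simp: words_def nonneg)
  then show ?thesis
    by (simp add: sum_prefixes)
qed

lemma append_le_left: "p (x @ u) \<le> p x"
proof -
  have "p (x @ u) \<le> (\<Sum>y\<in>words (length u). p (x @ y))"
    using finite_words by (intro member_le_sum) (auto simp: words_def nonneg)
  then show ?thesis
    by (simp add: sum_suffixes)
qed

lemma prob_eq_0_if_drop: "p (drop n w) = 0 \<Longrightarrow> p w = 0"
  using append_le_right[of "take n w" "drop n w"] nonneg[of w] by simp

lemma sum_words_drop:
  assumes "R \<le> L"
  shows "(\<Sum>w\<in>words L. p w * g (drop (L - R) w)) = (\<Sum>u\<in>words R. p u * g u)"
proof -
  have "(\<Sum>w\<in>words L. p w * g (drop (L - R) w))
      = (\<Sum>x\<in>words (L - R). \<Sum>u\<in>words R. p (x @ u) * g (drop (L - R) (x @ u)))"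
    using sum_words_add[of _ "L - R" R] assms by (simp only: le_add_diff_inverse2)
  also have "\<dots> = (\<Sum>x\<in>words (L - R). \<Sum>u\<in>words R. p (x @ u) * g u)"
    by (intro sum.cong refl) (simp add: words_def)
  also have "\<dots> = (\<Sum>u\<in>words R. \<Sum>x\<in>words (L - R). p (x @ u) * g u)"
    by (rule sum.swap)
  also have "\<dots> = (\<Sum>u\<in>words R. p u * g u)"
    by (simp add: sum_distrib_right[symmetric] sum_prefixes)
  finally show ?thesis .
qed

lemma sum_words_take:
  assumes "L \<le> R"
  shows "(\<Sum>v\<in>words R. p v * g (take L v)) = (\<Sum>x\<in>words L. p x * g x)"
proof -
  have "(\<Sum>v\<in>words R. p v * g (take L v))
      = (\<Sum>x\<in>words L. \<Sum>u\<in>words (R - L). p (x @ u) * g (take L (x @ u)))"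
    using sum_words_add[of _ L "R - L"] assms by (simp only: le_add_diff_inverse)
  also have "\<dots> = (\<Sum>x\<in>words L. \<Sum>u\<in>words (R - L). p (x @ u) * g x)"
    by (intro sum.cong refl) (simp add: words_def)
  also have "\<dots> = (\<Sum>x\<in>words L. p x * g x)"
    by (simp add: sum_distrib_right[symmetric] sum_suffixes)
  finally show ?thesis .
qed

lemma state_uncertainty_within:
  assumes "L \<le> R"
  shows "state_uncertainty R p L = block_entropy p R - block_entropy p L"
proof -
  have term_eq: "p s * (state_post R p s v * log 2 (state_post R p s v))
      = (if take L v = s then xlog (p v) - p v * log 2 (p s) else 0)"
    if "s \<in> words L" for s v
  proof (cases "take L v = s")
    case True
    then have "p v \<le> p s"
      using append_le_left[of s "drop L v"] by (metis append_take_drop_id)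
    with True that assms show ?thesis
      using mult_xlog_divide[OF nonneg] by (simp add: state_post_def words_def xlog_def)
  qed (use that assms in \<open>simp add: state_post_def words_def\<close>)
  have "- state_uncertainty R p L
      = (\<Sum>s\<in>words L. \<Sum>v\<in>words R. if take L v = s then xlog (p v) - p v * log 2 (p s) else 0)"
    by (simp add: state_uncertainty_def sum_distrib_left term_eq)
  also have "\<dots>
      = (\<Sum>v\<in>words R. \<Sum>s\<in>words L. if take L v = s then xlog (p v) - p v * log 2 (p s) else 0)"
    by (rule sum.swap)
  also have "\<dots> = (\<Sum>v\<in>words R. xlog (p v) - p v * log 2 (p (take L v)))"
    using assms by (intro sum.cong refl, subst sum.delta'[OF finite_words]) (auto simp: words_def)
  also have "\<dots> = - block_entropy p R - (\<Sum>x\<in>words L. p x * log 2 (p x))"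
    using sum_words_take[OF assms, of "\<lambda>x. log 2 (p x)"]
    by (simp add: sum_subtractf block_entropy_xlog)
  finally show ?thesis
    by (simp add: block_entropy_def)
qed

lemma sync_info_eq: "sync_info R p = (\<Sum>L<R. block_entropy p R - block_entropy p L)"
proof -
  have synchronized: "state_uncertainty R p L = 0" if "L \<notin> {..<R}" for L
    using that state_uncertainty_within[of R R] state_uncertainty_beyond[of R L]
    by (cases "L = R") auto
  have "sync_info R p = (\<Sum>L<R. state_uncertainty R p L)"
    unfolding sync_info_def by (rule suminf_finite) (simp_all add: synchronized)
  then show ?thesis
    by (simp add: state_uncertainty_within)
qed

text \<open>\<open>H[S\<^sub>R\<^sub>+\<^sub>1 | S\<^sub>1 \<dots> S\<^sub>R]\<close>; the quotient is junk only where \<open>p u = 0\<close>, which the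
  weight \<open>p u\<close> cancels.\<close>
definition next_symbol_entropy :: "nat \<Rightarrow> real" where
  "next_symbol_entropy R = - (\<Sum>u\<in>words R. p u * (\<Sum>a\<in>UNIV. xlog (p (u @ [a]) / p u)))"

end

locale markov = stationary +
  fixes R :: nat
  assumes markov: "markov_order R p"
begin

abbreviation "h \<equiv> next_symbol_entropy R"

lemma prob_snoc:
  assumes "R \<le> length w"
  defines "u \<equiv> drop (length w - R) w"
  shows "p (w @ [a]) = p w * (p (u @ [a]) / p u)"
proof (cases "p u = 0")
  case True
  then have "p w = 0"
    using prob_eq_0_if_drop by (simp add: u_def)
  then show ?thesis
    using append_le_left[of w "[a]"] nonneg[of "w @ [a]"] by simp
next
  case False
  then show ?thesis
    using markov assms by (simp add: markov_order_def field_simps)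
qed

lemma sum_xlog_snoc:
  assumes "R \<le> length w"
  defines "u \<equiv> drop (length w - R) w"
  shows "(\<Sum>a\<in>UNIV. xlog (p (w @ [a])))
      = xlog (p w) + p w * (\<Sum>a\<in>UNIV. xlog (p (u @ [a]) / p u))"
proof -
  have "(\<Sum>a\<in>UNIV. xlog (p (w @ [a])))
      = (\<Sum>a\<in>UNIV. p (u @ [a]) / p u * xlog (p w) + p w * xlog (p (u @ [a]) / p u))"
    unfolding u_def prob_snoc[OF assms(1)] by (intro sum.cong refl xlog_mult) (simp_all add: nonneg)
  also have "\<dots> = (\<Sum>a\<in>UNIV. p (u @ [a])) / p u * xlog (p w)
      + p w * (\<Sum>a\<in>UNIV. xlog (p (u @ [a]) / p u))"
    by (simp add: sum.distrib sum_distrib_left sum_distrib_right sum_divide_distrib)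
  also have "\<dots> = xlog (p w) + p w * (\<Sum>a\<in>UNIV. xlog (p (u @ [a]) / p u))"
  proof (cases "p u = 0")
    case True
    then have "p w = 0"
      using prob_eq_0_if_drop by (simp add: u_def)
    then show ?thesis
      by simp
  next
    case False
    then show ?thesis
      using stationary by (simp add: stationary_process_def)
  qed
  finally show ?thesis .
qed

lemma block_entropy_Suc:
  assumes "R \<le> L"
  shows "block_entropy p (Suc L) = block_entropy p L + h"
proof -
  have "block_entropy p (Suc L) = - (\<Sum>w\<in>words L. \<Sum>a\<in>UNIV. xlog (p (w @ [a])))"
    by (simp add: block_entropy_xlog sum_words_Suc_snoc)
  also have "\<dots> = block_entropy p L
      - (\<Sum>w\<in>words L. p w * (\<Sum>a\<in>UNIV. xlog (p (drop (L - R) w @ [a]) / p (drop (L - R) w))))"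
    using assms by (simp add: sum_xlog_snoc words_def sum.distrib block_entropy_xlog)
  also have "\<dots> = block_entropy p L + h"
    using sum_words_drop[OF assms, of "\<lambda>u. \<Sum>a\<in>UNIV. xlog (p (u @ [a]) / p u)"]
    by (simp add: next_symbol_entropy_def)
  finally show ?thesis .
qed

lemma block_entropy_affine:
  assumes "R \<le> L"
  shows "block_entropy p L = block_entropy p R + real (L - R) * h"
  using assms
proof (induction L rule: dec_induct)
  case (step n)
  then show ?case
    by (simp add: block_entropy_Suc Suc_diff_le algebra_simps)
qed simp

lemma entropy_rate_eq: "entropy_rate p = h"
proof -
  let ?c = "block_entropy p R - real R * h"
  have "?c / real L + h = block_entropy p L / real L" if "Suc R \<le> L" for L
  proof -
    have "block_entropy p L = ?c + real L * h"
      using that block_entropy_affine[of L] by (simp add: of_nat_diff algebra_simps)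
    with that show ?thesis
      by (simp add: field_simps)
  qed
  then have "\<forall>\<^sub>F L in sequentially. ?c / real L + h = block_entropy p L / real L"
    unfolding eventually_sequentially by blast
  moreover have "(\<lambda>L. ?c / real L + h) \<longlonglongrightarrow> 0 + h"
    by (intro tendsto_intros)
  ultimately have "(\<lambda>L. block_entropy p L / real L) \<longlonglongrightarrow> h"
    by (simp add: tendsto_cong)
  then show ?thesis
    unfolding entropy_rate_def by (rule limI)
qed

lemma excess_entropy_eq: "excess_entropy p = block_entropy p R - real R * h"
proof -
  have "excess_entropy p = (\<Sum>L<R. entropy_gain p (Suc L) - h)"
    unfolding excess_entropy_def entropy_rate_eq
    by (rule suminf_finite) (auto simp: entropy_gain_def block_entropy_Suc)
  also have "\<dots> = (\<Sum>L<R. block_entropy p (Suc L) - block_entropy p L) - real R * h"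
    by (simp add: entropy_gain_def sum_subtractf)
  finally show ?thesis
    by (simp add: sum_lessThan_telescope block_entropy_0)
qed

lemma transient_info_eq:
  "transient_info p = (\<Sum>L<R. block_entropy p R - block_entropy p L - (real R - real L) * h)"
proof -
  have "excess_entropy p + entropy_rate p * real L - block_entropy p L = 0" if "L \<notin> {..<R}" for L
    using that block_entropy_affine[of L]
    by (simp add: excess_entropy_eq entropy_rate_eq of_nat_diff algebra_simps)
  then have "transient_info p = (\<Sum>L<R. excess_entropy p + entropy_rate p * real L - block_entropy p L)"
    unfolding transient_info_def by (intro suminf_finite) simp_all
  then show ?thesis
    by (simp add: excess_entropy_eq entropy_rate_eq algebra_simps)
qed

end

lemma sum_lessThan_real_diff: "(\<Sum>L<R. real R - real L) = real R * (real R + 1) / 2"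
proof (induction R)
  case (Suc R)
  have "(\<Sum>L<Suc R. real (Suc R) - real L) = (\<Sum>L<R. real R - real L) + real R + 1"
    by (simp add: sum.distrib add_diff_eq[symmetric])
  then show ?case
    using Suc by (simp add: field_simps)
qed simp

theorem theorem1:
  fixes p :: "'a::finite list \<Rightarrow> real" and R :: nat
  assumes "stationary_process p" and "1 \<le> R" and "markov_order R p"
  shows "sync_info R p = transient_info p + 1/2 * real R * (real R + 1) * entropy_rate p"
proof -
  interpret markov p R
    using assms(1,3) by unfold_locales
  have "sync_info R p - transient_info p = (\<Sum>L<R. (real R - real L) * h)"
    by (simp add: sync_info_eq transient_info_eq sum_subtractf[symmetric])
  also have "\<dots> = real R * (real R + 1) / 2 * entropy_rate p"
    by (simp add: sum_distrib_right[symmetric] sum_lessThan_real_diff entropy_rate_eq)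
  finally show ?thesis
    by simp
qed

end
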